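(* Every topological space $X$ that admits a selection map has the universal fixed point property. Conversely, if $X$ is a topological space with the universal fixed point property for which the evaluation map $C(X,X)\times X\to X$, $(f,x)\mapsto f(x)$, is continuous, then $X$ admits a selection map.
   Context: For a topological space $X$, let $C(X,X)$ be the set of continuous self-maps of $X$ with the compact-open topology (generated by the sets $\{g\mid g(K)\subseteq U\}$, $K\subseteq X$ compact, $U\subseteq X$ open). A selection map for $X$ is a continuous map $\Phi\colon C(X,X)\to X$ such that $f(\Phi(f))=\Phi(f)$ for all $f\in C(X,X)$. The space $X$ has the universal fixed point property if for every topological space $T$ and every continuous map $f\colon T\times X\to X$ there exists a continuous map $p\colon T\to X$ with $f(t,p(t))=p(t)$ for all $t\in T$. *)

theory Defs
  imports "HOL-Analysis.Analysis"
begin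

text \<open>Functions on the type 'a are
  normalised to be extensional (value undefined) outside topspace X, so that each
  continuous map on X has exactly one representative.\<close>
definition cmaps :: "'a topology \<Rightarrow> ('a \<Rightarrow> 'a) set" where
  "cmaps X = {f. continuous_map X X f \<and> f \<in> extensional (topspace X)}"

definition compact_open :: "'a topology \<Rightarrow> ('a \<Rightarrow> 'a) topology" where
  "compact_open X = topology_generated_by
     {{g \<in> cmaps X. g ` K \<subseteq> U} | K U. compactin X K \<and> openin X U}"

definition selection_map :: "'a topology \<Rightarrow> (('a \<Rightarrow> 'a) \<Rightarrow> 'a) \<Rightarrow> bool" where
  "selection_map X \<Phi> \<longleftrightarrow> continuous_map (compact_open X) X \<Phi> \<and>
     (\<forall>f \<in> cmaps X. f (\<Phi> f) = \<Phi> f)"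

definition param_fpp :: "'b topology \<Rightarrow> 'a topology \<Rightarrow> bool" where
  "param_fpp T X \<longleftrightarrow> (\<forall>f. continuous_map (prod_topology T X) X f \<longrightarrow>
     (\<exists>p. continuous_map T X p \<and> (\<forall>t \<in> topspace T. f (t, p t) = p t)))"

definition eval_continuous :: "'a topology \<Rightarrow> bool" where
  "eval_continuous X \<longleftrightarrow>
     continuous_map (prod_topology (compact_open X) X) X (\<lambda>(f, x). f x)"

end

theory Submission
  imports Defs
begin

text \<open>A selection map composed with the currying of a parametrised family
  \<open>T \<times> X \<rightarrow> X\<close> picks a fixed point continuously in the parameter; currying is
  continuous into the compact-open topology by the tube lemma. Conversely, the
  universal fixed point property applied to the evaluation map, with parameter
  space \<open>C(X,X)\<close> itself, yields a selection map.\<close>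

lemma topspace_compact_open [simp]: "topspace (compact_open X) = cmaps X"
proof -
  have "{g \<in> cmaps X. g ` {} \<subseteq> {}} \<in> {{g \<in> cmaps X. g ` K \<subseteq> U} |K U. compactin X K \<and> openin X U}"
    by (intro CollectI exI[of _ "{}"]) auto
  then show ?thesis
    unfolding compact_open_def topology_generated_by_topspace by auto
qed

lemma continuous_map_slice:
  assumes "continuous_map (prod_topology T X) Y f" and "t \<in> topspace T"
  shows "continuous_map X Y (\<lambda>x. f (t, x))"
proof -
  have "continuous_map X (prod_topology T X) (\<lambda>x. (t, x))"
    using assms(2) by (auto simp: continuous_map_pairwise o_def)
  then show ?thesis
    using continuous_map_compose[OF _ assms(1)] by (simp add: o_def)
qed

lemma restrict_slice_in_cmaps:
  assumes "continuous_map (prod_topology T X) X f" and "t \<in> topspace T"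
  shows "restrict (\<lambda>x. f (t, x)) (topspace X) \<in> cmaps X"
proof -
  have "continuous_map X X (restrict (\<lambda>x. f (t, x)) (topspace X))"
    by (rule continuous_map_eq[OF continuous_map_slice[OF assms]]) simp
  then show ?thesis by (simp add: cmaps_def)
qed

lemma openin_slicewise_preimage:
  assumes f: "continuous_map (prod_topology T X) Y f"
    and K: "compactin X K" and U: "openin Y U"
  shows "openin T {t \<in> topspace T. \<forall>x\<in>K. f (t, x) \<in> U}"
proof (subst openin_subopen, intro ballI)
  define W where "W = {z \<in> topspace (prod_topology T X). f z \<in> U}"
  have W: "openin (prod_topology T X) W"
    unfolding W_def using openin_continuous_map_preimage[OF f U] .
  fix t0 assume t0: "t0 \<in> {t \<in> topspace T. \<forall>x\<in>K. f (t, x) \<in> U}"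
  then have "t0 \<in> topspace T" and "{t0} \<times> K \<subseteq> W"
    using compactin_subset_topspace[OF K] unfolding W_def by auto
  from tube_lemma_right[OF W K this] obtain V V' where
    V: "openin T V" "t0 \<in> V" "K \<subseteq> V'" "V \<times> V' \<subseteq> W"
    by blast
  then have "V \<subseteq> {t \<in> topspace T. \<forall>x\<in>K. f (t, x) \<in> U}"
    using openin_subset[OF V(1)] unfolding W_def by blast
  with V show "\<exists>V. openin T V \<and> t0 \<in> V \<and> V \<subseteq> {t \<in> topspace T. \<forall>x\<in>K. f (t, x) \<in> U}"
    by blast
qed

lemma continuous_map_curry_compact_open:
  assumes f: "continuous_map (prod_topology T X) X f"
  shows "continuous_map T (compact_open X) (\<lambda>t. restrict (\<lambda>x. f (t, x)) (topspace X))"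
  unfolding compact_open_def
proof (rule continuous_on_generated_topo)
  show "(\<lambda>t. restrict (\<lambda>x. f (t, x)) (topspace X)) ` topspace T
      \<subseteq> \<Union> {{g \<in> cmaps X. g ` K \<subseteq> U} |K U. compactin X K \<and> openin X U}"
    using restrict_slice_in_cmaps[OF f] topspace_compact_open[of X]
    unfolding compact_open_def topology_generated_by_topspace by blast
next
  fix S assume "S \<in> {{g \<in> cmaps X. g ` K \<subseteq> U} |K U. compactin X K \<and> openin X U}"
  then obtain K U where S: "S = {g \<in> cmaps X. g ` K \<subseteq> U}"
    and K: "compactin X K" and U: "openin X U"
    by blast
  have "(\<lambda>t. restrict (\<lambda>x. f (t, x)) (topspace X)) -` S \<inter> topspace T
      = {t \<in> topspace T. \<forall>x\<in>K. f (t, x) \<in> U}"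
    using restrict_slice_in_cmaps[OF f] compactin_subset_topspace[OF K] unfolding S by auto
  then show "openin T ((\<lambda>t. restrict (\<lambda>x. f (t, x)) (topspace X)) -` S \<inter> topspace T)"
    using openin_slicewise_preimage[OF f K U] by simp
qed

lemma selection_map_imp_param_fpp:
  assumes "selection_map X \<Phi>"
  shows "param_fpp T X"
  unfolding param_fpp_def
proof (intro allI impI)
  fix f assume f: "continuous_map (prod_topology T X) X f"
  define p where "p = \<Phi> \<circ> (\<lambda>t. restrict (\<lambda>x. f (t, x)) (topspace X))"
  have p: "continuous_map T X p"
    unfolding p_def using assms continuous_map_compose[OF continuous_map_curry_compact_open[OF f]]
    by (auto simp: selection_map_def)
  have "f (t, p t) = p t" if t: "t \<in> topspace T" for t
  proof -
    have "p t \<in> topspace X"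
      using continuous_map_image_subset_topspace[OF p] t by blast
    then show ?thesis
      using assms restrict_slice_in_cmaps[OF f t] unfolding p_def selection_map_def by auto
  qed
  with p show "\<exists>p. continuous_map T X p \<and> (\<forall>t\<in>topspace T. f (t, p t) = p t)"
    by blast
qed

lemma param_fpp_eval_imp_selection_map:
  assumes "param_fpp (compact_open X) X" and "eval_continuous X"
  shows "\<exists>\<Phi>. selection_map X \<Phi>"
proof -
  obtain \<Phi> where "continuous_map (compact_open X) X \<Phi>"
    and "\<forall>f\<in>topspace (compact_open X). (\<lambda>(f, x). f x) (f, \<Phi> f) = \<Phi> f"
    using assms(1)[unfolded param_fpp_def, rule_format, of "\<lambda>(f, x). f x"] assms(2)
    unfolding eval_continuous_def by blast
  then show ?thesis
    unfolding selection_map_def by auto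
qed

theorem theorem7p3:
  fixes X :: "'a topology"
  shows "((\<exists>\<Phi>. selection_map X \<Phi>) \<longrightarrow> (\<forall>T :: 'b topology. param_fpp T X))
       \<and> ((\<forall>T :: ('a \<Rightarrow> 'a) topology. param_fpp T X) \<and> eval_continuous X
            \<longrightarrow> (\<exists>\<Phi>. selection_map X \<Phi>))"
  using selection_map_imp_param_fpp param_fpp_eval_imp_selection_map by blast

end
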